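(* Assume CAT (in the form stated in the context). Let $p\ge 2$ be a natural number and let $T\subseteq{}^{<\omega_1}p$ be a binarisable special Aronszajn tree. Then there is a colouring $c:T^{[2]}\to p+1=\{0,1,\dots,p\}$ such that for every subtree $S$ of $T$, the set $\{c(\{s,t\}):\{s,t\}\in S^{[2]}\}$ has at least $3$ elements.
   Context: Trees are subsets $T\subseteq{}^{<\omega_1}p$ (functions from countable ordinals into $p=\{0,\dots,p-1\}$) closed under initial segments, ordered by $s<_T t$ iff $t$ properly extends $s$; $\lg(s)$ denotes the domain (an ordinal) of $s$, and $s^\frown j$ is the one-point extension of $s$ by value $j$. $T$ is an Aronszajn tree if it is uncountable, every level is countable, and it has no uncountable chain. $T$ is special if it is a union of countably many antichains. For $s,t\in T$, the meet $s\wedge t$ is the longest common initial segment of $s$ and $t$. A subtree of $T$ is an uncountable subset $S\subseteq T$ closed under meets ($s,t\in S\Rightarrow s\wedge t\in S$). A subtree $S$ is binary if every node of $S$ has at most two distinct immediate successors in $S$ (i.e. elements of $S$ above it with no element of $S$ strictly in between). $T$ is binarisable if every subtree of $T$ contains a binary subtree. $T^{[2]}=\{\{s,t\}: s<_T t\}$, and for $S\subseteq T$, $S^{[2]}=\{\{s,t\}: s,t\in S,\ s<_T t\}$. Colouring Axiom for Trees (CAT), in the form used here: for every Aronszajn tree $T$, every subtree $S$ of $T$ (including $S=T$) and every partition $S=K_0\cup K_1$, there are an uncountable $X\subseteq S$ and $i<2$ such that $x\wedge y\in K_i$ for all distinct $x,y\in X$; and likewise for partitions of $S$ into any finite number of pieces.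 *)

theory Defs
  imports Main "HOL-Library.Countable_Set"
begin

text \<open>Countable ordinals are modelled by an abstract wellordered type 'o in which
every proper initial segment is countable and which is itself uncountable
(i.e. 'o is order-isomorphic to omega_1).  A node s of the full tree of
sequences of length less than omega_1 with values in p is a partial map
'o => nat option whose domain is an initial segment {..<a} (a = lg s) and
whose values lie in {0..<p}.\<close>

type_synonym 'o node = "'o \<Rightarrow> nat option"

definition seqs :: "nat \<Rightarrow> ('o::wellorder) node set" where
  "seqs p = {s. (\<exists>a. dom s = {..<a}) \<and> ran s \<subseteq> {..<p}}"

definition tless :: "('o::wellorder) node \<Rightarrow> 'o node \<Rightarrow> bool" where
  "tless s t \<longleftrightarrow> s \<subseteq>\<^sub>m t \<and> s \<noteq> t"

definition is_tree :: "nat \<Rightarrow> ('o::wellorder) node set \<Rightarrow> bool" where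
  "is_tree p T \<longleftrightarrow> T \<subseteq> seqs p \<and> (\<forall>t\<in>T. \<forall>a. t |` {..<a} \<in> T)"

definition aronszajn :: "nat \<Rightarrow> ('o::wellorder) node set \<Rightarrow> bool" where
  "aronszajn p T \<longleftrightarrow> is_tree p T \<and> uncountable T
     \<and> (\<forall>a. countable {t\<in>T. dom t = {..<a}})
     \<and> (\<forall>C\<subseteq>T. (\<forall>x\<in>C. \<forall>y\<in>C. x \<subseteq>\<^sub>m y \<or> y \<subseteq>\<^sub>m x) \<longrightarrow> countable C)"

definition antichain :: "('o::wellorder) node set \<Rightarrow> bool" where
  "antichain A \<longleftrightarrow> (\<forall>x\<in>A. \<forall>y\<in>A. \<not> tless x y)"

definition special :: "('o::wellorder) node set \<Rightarrow> bool" where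
  "special T \<longleftrightarrow> (\<exists>A :: nat \<Rightarrow> 'o node set. T = (\<Union>n. A n) \<and> (\<forall>n. antichain (A n)))"

definition meet :: "('o::wellorder) node \<Rightarrow> 'o node \<Rightarrow> 'o node" where
  "meet s t = s |` {x. \<forall>y\<le>x. s y \<noteq> None \<and> s y = t y}"

definition subtree :: "('o::wellorder) node set \<Rightarrow> 'o node set \<Rightarrow> bool" where
  "subtree T S \<longleftrightarrow> S \<subseteq> T \<and> uncountable S \<and> (\<forall>s\<in>S. \<forall>t\<in>S. meet s t \<in> S)"

definition imm_succs :: "('o::wellorder) node set \<Rightarrow> 'o node \<Rightarrow> 'o node set" where
  "imm_succs S s = {t\<in>S. tless s t \<and> \<not> (\<exists>u\<in>S. tless s u \<and> tless u t)}"

definition binary :: "('o::wellorder) node set \<Rightarrow> bool" where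
  "binary S \<longleftrightarrow> (\<forall>s\<in>S. finite (imm_succs S s) \<and> card (imm_succs S s) \<le> 2)"

definition binarisable :: "('o::wellorder) node set \<Rightarrow> bool" where
  "binarisable T \<longleftrightarrow> (\<forall>S. subtree T S \<longrightarrow> (\<exists>S'. subtree S S' \<and> binary S'))"

text \<open>Colouring Axiom for Trees, relative to the model 'o of omega_1, for all
Aronszajn trees of sequences into any finite q, and partitions into n pieces.\<close>
definition CAT :: "('o::wellorder) itself \<Rightarrow> bool" where
  "CAT _ \<longleftrightarrow> (\<forall>q (T :: 'o node set). aronszajn q T \<longrightarrow>
     (\<forall>S. (S = T \<or> subtree T S) \<longrightarrow>
       (\<forall>(n::nat) (K :: 'o node \<Rightarrow> nat). (\<forall>s\<in>S. K s < n) \<longrightarrow>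
          (\<exists>X\<subseteq>S. uncountable X \<and> (\<exists>i<n. \<forall>x\<in>X. \<forall>y\<in>X. x \<noteq> y \<longrightarrow> K (meet x y) = i)))))"

end

theory Submission
  imports Defs
begin

(* Since T is special, there is f : T -> nat with f s ~= f t whenever s < t.  Colour a pair
   s < t by p if f s < f t, and otherwise by t (lg s), the direction in which t leaves s.
   Because T is Aronszajn, every uncountable X within T branches: above any node with
   uncountably many elements of X above it lie two incomparable such nodes.  Hence meets of
   pairs from X form arbitrarily long chains, on which f is injective, so f can be pushed
   above any bound. *)

definition lg :: "('o::wellorder) node \<Rightarrow> 'o" where
  "lg s = (LEAST a. s a = None)"

definition comparable :: "('o::wellorder) node \<Rightarrow> 'o node \<Rightarrow> bool" where
  "comparable s t \<longleftrightarrow> s \<subseteq>\<^sub>m t \<or> t \<subseteq>\<^sub>m s"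

lemma lg_eqI:
  assumes "dom s = {..<a}"
  shows "lg s = a"
  unfolding lg_def
proof (rule Least_equality)
  show "s a = None" using assms by auto
  show "a \<le> b" if "s b = None" for b
    using that assms by (metis domIff lessThan_iff not_le)
qed

lemma dom_seqs:
  assumes "s \<in> seqs p"
  shows "dom s = {..<lg s}"
proof -
  obtain a where "dom s = {..<a}" using assms unfolding seqs_def by blast
  then show ?thesis by (simp add: lg_eqI)
qed

lemma seqs_value_less:
  assumes "s \<in> seqs p" "s x = Some a"
  shows "a < p"
proof -
  have "a \<in> ran s" using assms(2) by (auto simp: ran_def)
  then show ?thesis using assms(1) unfolding seqs_def by auto
qed

lemma comparable_common_extension:
  assumes "s \<in> seqs p" "t \<in> seqs p" "s \<subseteq>\<^sub>m x" "t \<subseteq>\<^sub>m x"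
  shows "comparable s t"
proof (cases "lg s \<le> lg t")
  case True
  then have "dom s \<subseteq> dom t" using dom_seqs[OF assms(1)] dom_seqs[OF assms(2)] by auto
  then have "s \<subseteq>\<^sub>m t" using assms(3,4) unfolding map_le_def by (metis subsetD)
  then show ?thesis by (simp add: comparable_def)
next
  case False
  then have "dom t \<subseteq> dom s" using dom_seqs[OF assms(1)] dom_seqs[OF assms(2)] by auto
  then have "t \<subseteq>\<^sub>m s" using assms(3,4) unfolding map_le_def by (metis subsetD)
  then show ?thesis by (simp add: comparable_def)
qed

lemma incomparable_extensions:
  assumes "s \<in> seqs p" "t \<in> seqs p" "\<not> comparable s t"
    and "s \<subseteq>\<^sub>m u" "t \<subseteq>\<^sub>m v"
  shows "\<not> comparable u v"
proof
  assume "comparable u v"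
  then have "s \<subseteq>\<^sub>m v \<or> t \<subseteq>\<^sub>m u"
    using assms(4,5) map_le_trans[of s u v] map_le_trans[of t v u] unfolding comparable_def by blast
  then show False
    using comparable_common_extension[OF assms(1,2) _ assms(5)]
      comparable_common_extension[OF assms(1,2) assms(4)] assms(3) by blast
qed

lemma lg_in_dom_if_tless:
  assumes "s \<in> seqs p" "t \<in> seqs p" "tless s t"
  shows "lg s \<in> dom t"
proof -
  have "dom s \<subseteq> dom t" using assms(3) by (simp add: tless_def map_le_implies_dom_le)
  moreover have "dom s \<noteq> dom t"
  proof
    assume "dom s = dom t"
    then have "s = t" using assms(3) unfolding tless_def map_le_def
      by (metis domIff ext)
    then show False using assms(3) by (simp add: tless_def)
  qed
  ultimately have "lg s < lg t" using dom_seqs[OF assms(1)] dom_seqs[OF assms(2)]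
    by (metis lessThan_subset_iff order_le_less)
  then show ?thesis using dom_seqs[OF assms(2)] by blast
qed

lemma map_le_if_agree_below:
  assumes "u \<in> seqs p" "u \<alpha> = None" "\<forall>x<\<alpha>. u x = v x"
  shows "u \<subseteq>\<^sub>m v"
proof -
  have "lg u \<le> \<alpha>" using assms(2) dom_seqs[OF assms(1)] by (metis domIff lessThan_iff not_le)
  then show ?thesis using assms(3) dom_seqs[OF assms(1)] unfolding map_le_def
    by (metis lessThan_iff order_less_le_trans)
qed

lemma meet_incomparable_restrict:
  assumes u: "u \<in> seqs p" and v: "v \<in> seqs p" and uv: "\<not> comparable u v"
  obtains \<alpha> where "meet u v = u |` {..<\<alpha>}" "\<alpha> \<in> dom u" "\<alpha> \<in> dom v"
    "u \<alpha> \<noteq> v \<alpha>" "\<forall>x<\<alpha>. u x = v x"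
proof
  define \<alpha> where "\<alpha> = (LEAST x. u x \<noteq> v x)"
  have incomp: "\<not> u \<subseteq>\<^sub>m v" "\<not> v \<subseteq>\<^sub>m u" using uv by (auto simp: comparable_def)
  then have "\<exists>x. u x \<noteq> v x" by (metis ext map_le_refl)
  then show diff: "u \<alpha> \<noteq> v \<alpha>" unfolding \<alpha>_def by (rule LeastI_ex)
  show agree: "\<forall>x<\<alpha>. u x = v x" unfolding \<alpha>_def using not_less_Least by blast
  show "\<alpha> \<in> dom u"
  proof (rule ccontr)
    assume "\<alpha> \<notin> dom u"
    then have "u \<subseteq>\<^sub>m v" using map_le_if_agree_below[OF u _ agree] by blast
    then show False using incomp by blast
  qed
  then have below: "u x \<noteq> None" if "x < \<alpha>" for x
    using that dom_seqs[OF u] by (metis domIff lessThan_iff order.strict_trans)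
  show "\<alpha> \<in> dom v"
  proof (rule ccontr)
    assume "\<alpha> \<notin> dom v"
    moreover have "\<forall>x<\<alpha>. v x = u x" using agree by simp
    ultimately have "v \<subseteq>\<^sub>m u" using map_le_if_agree_below[OF v] by blast
    then show False using incomp by blast
  qed
  have "{x. \<forall>y\<le>x. u y \<noteq> None \<and> u y = v y} = {..<\<alpha>}"
  proof (intro set_eqI iffI)
    fix x assume "x \<in> {x. \<forall>y\<le>x. u y \<noteq> None \<and> u y = v y}"
    then have "\<forall>y\<le>x. u y = v y" by auto
    then show "x \<in> {..<\<alpha>}" using diff by (metis lessThan_iff not_le)
  next
    fix x assume "x \<in> {..<\<alpha>}"
    then have "y < \<alpha>" if "y \<le> x" for y using that by auto
    then show "x \<in> {x. \<forall>y\<le>x. u y \<noteq> None \<and> u y = v y}"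
      using agree below by auto
  qed
  then show "meet u v = u |` {..<\<alpha>}" by (simp add: meet_def)
qed

lemma meet_incomparable:
  assumes u: "u \<in> seqs p" and v: "v \<in> seqs p" and uv: "\<not> comparable u v"
  shows "meet u v \<in> seqs p" "tless (meet u v) u" "tless (meet u v) v"
    and "u (lg (meet u v)) \<noteq> v (lg (meet u v))"
proof -
  obtain \<alpha> where m: "meet u v = u |` {..<\<alpha>}" and du: "\<alpha> \<in> dom u" and dv: "\<alpha> \<in> dom v"
    and diff: "u \<alpha> \<noteq> v \<alpha>" and agree: "\<forall>x<\<alpha>. u x = v x"
    using meet_incomparable_restrict[OF u v uv] by blast
  have dm: "dom (meet u v) = {..<\<alpha>}" using m du dom_seqs[OF u] by auto
  have "ran (meet u v) \<subseteq> ran u" using m by (auto simp: ran_def restrict_map_def split: if_splits)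
  then show "meet u v \<in> seqs p" using u dm unfolding seqs_def by blast
  have "meet u v \<subseteq>\<^sub>m u" "meet u v \<subseteq>\<^sub>m v" using m agree by (auto simp: map_le_def)
  moreover have "meet u v \<noteq> u" "meet u v \<noteq> v"
    using m du dv by (metis domIff lessThan_iff less_irrefl restrict_out)+
  ultimately show "tless (meet u v) u" "tless (meet u v) v" by (simp_all add: tless_def)
  show "u (lg (meet u v)) \<noteq> v (lg (meet u v))" using diff dm lg_eqI by metis
qed

lemma map_le_meet:
  assumes u: "u \<in> seqs p" and v: "v \<in> seqs p" and uv: "\<not> comparable u v"
    and y: "y \<in> seqs p" "y \<subseteq>\<^sub>m u" "y \<subseteq>\<^sub>m v"
  shows "y \<subseteq>\<^sub>m meet u v"
proof -
  obtain \<alpha> where m: "meet u v = u |` {..<\<alpha>}" and diff: "u \<alpha> \<noteq> v \<alpha>"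
    using meet_incomparable_restrict[OF u v uv] by blast
  have "\<alpha> \<notin> dom y" using diff y(2,3) unfolding map_le_def by metis
  then have "dom y \<subseteq> {..<\<alpha>}" using dom_seqs[OF y(1)] by (auto simp: not_less)
  then show ?thesis using m y(2) unfolding map_le_def by auto
qed

lemma tless_map_le_trans:
  assumes "tless s t" "t \<subseteq>\<^sub>m w"
  shows "tless s w"
  using assms map_le_trans map_le_antisym unfolding tless_def by metis

lemma countable_bounded:
  fixes B :: "('o::wellorder) set"
  assumes "uncountable (UNIV :: 'o set)" "\<forall>a::'o. countable {..<a}" "countable B"
  obtains \<alpha> where "\<forall>b\<in>B. b < \<alpha>"
proof -
  have "countable (\<Union>b\<in>B. insert b {..<b})" using assms(2,3) by blast
  then obtain \<alpha> where "\<alpha> \<notin> (\<Union>b\<in>B. insert b {..<b})" using assms(1) by (metis UNIV_eq_I)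
  then have "\<forall>b\<in>B. b < \<alpha>" by (auto simp: not_less_iff_gr_or_eq)
  then show ?thesis by (rule that)
qed

lemma aronszajn_subset_seqs: "aronszajn p T \<Longrightarrow> T \<subseteq> seqs p"
  by (simp add: aronszajn_def is_tree_def)

lemma aronszajn_countable_below:
  assumes segs: "\<forall>a::'o. countable {..<a}" and aron: "aronszajn p (T :: ('o::wellorder) node set)"
  shows "countable {t\<in>T. lg t < \<alpha>}"
proof (rule countable_subset)
  show "{t\<in>T. lg t < \<alpha>} \<subseteq> (\<Union>\<beta>\<in>{..<\<alpha>}. {t\<in>T. dom t = {..<\<beta>}})"
  proof
    fix t assume t: "t \<in> {t\<in>T. lg t < \<alpha>}"
    then have "dom t = {..<lg t}" using aronszajn_subset_seqs[OF aron] dom_seqs[of t p] by blast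
    then show "t \<in> (\<Union>\<beta>\<in>{..<\<alpha>}. {t\<in>T. dom t = {..<\<beta>}})" using t by blast
  qed
  show "countable (\<Union>\<beta>\<in>{..<\<alpha>}. {t\<in>T. dom t = {..<\<beta>}})"
    using segs aron by (simp add: aronszajn_def)
qed

lemma aronszajn_countable_if_thin_at_level:
  assumes segs: "\<forall>a::'o. countable {..<a}" and aron: "aronszajn p (T :: ('o::wellorder) node set)"
    and X: "X \<subseteq> T" and thin: "\<forall>w\<in>T. lg w = \<alpha> \<longrightarrow> countable {x\<in>X. w \<subseteq>\<^sub>m x}"
  shows "countable X"
proof (rule countable_subset)
  have Tseq: "T \<subseteq> seqs p" and Tres: "\<forall>t\<in>T. \<forall>a. t |` {..<a} \<in> T"
    using aron by (auto simp: aronszajn_def is_tree_def)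
  show "X \<subseteq> {t\<in>T. lg t < \<alpha>} \<union> (\<Union>w\<in>{w\<in>T. lg w = \<alpha>}. {x\<in>X. w \<subseteq>\<^sub>m x})"
  proof
    fix x assume x: "x \<in> X"
    then have xT: "x \<in> T" using X by blast
    then have dx: "dom x = {..<lg x}" using Tseq dom_seqs by blast
    show "x \<in> {t\<in>T. lg t < \<alpha>} \<union> (\<Union>w\<in>{w\<in>T. lg w = \<alpha>}. {x\<in>X. w \<subseteq>\<^sub>m x})"
    proof (cases "lg x < \<alpha>")
      case True
      then show ?thesis using xT by blast
    next
      case False
      define w where "w = x |` {..<\<alpha>}"
      have "dom w = {..<\<alpha>}" using dx False by (auto simp: w_def not_less)
      then have "lg w = \<alpha>" by (rule lg_eqI)
      then have "w \<in> {w\<in>T. lg w = \<alpha>}" using Tres xT by (simp add: w_def)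
      moreover have "w \<subseteq>\<^sub>m x" by (auto simp: w_def map_le_def)
      ultimately show ?thesis using x by blast
    qed
  qed
  have "{w\<in>T. lg w = \<alpha>} \<subseteq> {t\<in>T. dom t = {..<\<alpha>}}"
    using Tseq dom_seqs[of _ p] by auto
  then have "countable {w\<in>T. lg w = \<alpha>}"
    by (rule countable_subset) (use aron in \<open>simp add: aronszajn_def\<close>)
  then have "countable (\<Union>w\<in>{w\<in>T. lg w = \<alpha>}. {x\<in>X. w \<subseteq>\<^sub>m x})"
    by (rule countable_UN) (use thin in blast)
  then show "countable ({t\<in>T. lg t < \<alpha>} \<union> (\<Union>w\<in>{w\<in>T. lg w = \<alpha>}. {x\<in>X. w \<subseteq>\<^sub>m x}))"
    using aronszajn_countable_below[OF segs aron] by (rule countable_Un[rotated])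
qed

lemma aronszajn_countable_chain:
  assumes "aronszajn p T" "C \<subseteq> T" "\<forall>x\<in>C. \<forall>y\<in>C. comparable x y"
  shows "countable C"
  using assms by (simp add: aronszajn_def comparable_def)

lemma aronszajn_branching:
  fixes T :: "('o::wellorder) node set"
  assumes om: "uncountable (UNIV :: 'o set)" and segs: "\<forall>a::'o. countable {..<a}"
    and aron: "aronszajn p T" and X: "X \<subseteq> T" "uncountable X"
  obtains z1 z2 where "z1 \<in> T" "z2 \<in> T" "\<not> comparable z1 z2"
    "uncountable {x\<in>X. z1 \<subseteq>\<^sub>m x}" "uncountable {x\<in>X. z2 \<subseteq>\<^sub>m x}"
proof -
  define C where "C = {z\<in>T. uncountable {x\<in>X. z \<subseteq>\<^sub>m x}}"
  have "\<not> (\<forall>z1\<in>C. \<forall>z2\<in>C. comparable z1 z2)"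
  proof
    assume "\<forall>z1\<in>C. \<forall>z2\<in>C. comparable z1 z2"
    moreover have "C \<subseteq> T" by (auto simp: C_def)
    ultimately have "countable (lg ` C)" using aronszajn_countable_chain[OF aron] by blast
    then obtain \<alpha> where \<alpha>: "\<forall>\<beta>\<in>lg ` C. \<beta> < \<alpha>" using countable_bounded[OF om segs] by blast
    have "w \<notin> C" if "lg w = \<alpha>" for w using \<alpha> that by blast
    then have "\<forall>w\<in>T. lg w = \<alpha> \<longrightarrow> countable {x\<in>X. w \<subseteq>\<^sub>m x}" by (simp add: C_def)
    then have "countable X" by (rule aronszajn_countable_if_thin_at_level[OF segs aron X(1)])
    then show False using X(2) by blast
  qed
  then obtain z1 z2 where "z1 \<in> C" "z2 \<in> C" "\<not> comparable z1 z2" by blast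
  then show ?thesis using that[of z1 z2] by (simp add: C_def)
qed

lemma splitting_meet_above:
  fixes T :: "('o::wellorder) node set"
  assumes om: "uncountable (UNIV :: 'o set)" and segs: "\<forall>a::'o. countable {..<a}"
    and aron: "aronszajn p T" and X: "X \<subseteq> T" and y: "y \<in> T" "uncountable {x\<in>X. y \<subseteq>\<^sub>m x}"
  obtains u v y' where "u \<in> X" "v \<in> X" "\<not> comparable u v" "y \<subseteq>\<^sub>m meet u v"
    "y' \<in> T" "tless (meet u v) y'" "uncountable {x\<in>X. y' \<subseteq>\<^sub>m x}"
proof -
  define Y where "Y = {x\<in>X. y \<subseteq>\<^sub>m x}"
  have Tseq: "T \<subseteq> seqs p" using aron by (rule aronszajn_subset_seqs)
  obtain z1 z2 where z: "z1 \<in> T" "z2 \<in> T" "\<not> comparable z1 z2"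
    and big: "uncountable {x\<in>Y. z1 \<subseteq>\<^sub>m x}" "uncountable {x\<in>Y. z2 \<subseteq>\<^sub>m x}"
    using aronszajn_branching[OF om segs aron _ y(2)] X unfolding Y_def by blast
  have "{x\<in>Y. z1 \<subseteq>\<^sub>m x} \<noteq> {}" "{x\<in>Y. z2 \<subseteq>\<^sub>m x} \<noteq> {}"
    using big countable_empty by metis+
  then obtain u v where u: "u \<in> X" "y \<subseteq>\<^sub>m u" "z1 \<subseteq>\<^sub>m u" and v: "v \<in> X" "y \<subseteq>\<^sub>m v" "z2 \<subseteq>\<^sub>m v"
    unfolding Y_def by blast
  have seq: "z1 \<in> seqs p" "z2 \<in> seqs p" "u \<in> seqs p" "v \<in> seqs p" "y \<in> seqs p"
    using Tseq X u v z y by auto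
  have uv: "\<not> comparable u v" by (rule incomparable_extensions[OF seq(1,2) z(3) u(3) v(3)])
  note m = meet_incomparable[OF seq(3,4) uv]
  have "y \<subseteq>\<^sub>m meet u v" by (rule map_le_meet[OF seq(3,4) uv seq(5) u(2) v(2)])
  moreover have "tless (meet u v) z1"
  proof -
    have "\<not> z1 \<subseteq>\<^sub>m meet u v"
    proof
      assume "z1 \<subseteq>\<^sub>m meet u v"
      then have "z1 \<subseteq>\<^sub>m v" using m(3) map_le_trans by (auto simp: tless_def)
      then show False using comparable_common_extension[OF seq(1,2) _ v(3)] z(3) by blast
    qed
    moreover have "comparable (meet u v) z1"
      using comparable_common_extension[OF m(1) seq(1) _ u(3)] m(2) by (simp add: tless_def)
    ultimately show ?thesis by (auto simp: comparable_def tless_def)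
  qed
  moreover have "uncountable {x\<in>X. z1 \<subseteq>\<^sub>m x}"
  proof
    assume "countable {x\<in>X. z1 \<subseteq>\<^sub>m x}"
    then have "countable {x\<in>Y. z1 \<subseteq>\<^sub>m x}" by (rule countable_subset[rotated]) (auto simp: Y_def)
    then show False using big(1) by blast
  qed
  ultimately show ?thesis by (rule that[OF u(1) v(1) uv _ z(1)])
qed

definition specialising :: "('o::wellorder) node set \<Rightarrow> ('o node \<Rightarrow> nat) \<Rightarrow> bool" where
  "specialising T f \<longleftrightarrow> (\<forall>s\<in>T. \<forall>t\<in>T. tless s t \<longrightarrow> f s \<noteq> f t)"

lemma special_imp_specialising:
  assumes "special T"
  obtains f where "specialising T f"
proof -
  obtain A :: "nat \<Rightarrow> 'a node set" where TA: "T = (\<Union>n. A n)" and AA: "\<forall>n. antichain (A n)"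
    using assms unfolding special_def by blast
  define f where "f x = (LEAST n. x \<in> A n)" for x
  have "x \<in> A (f x)" if x: "x \<in> T" for x
  proof -
    obtain n where "x \<in> A n" using x TA by blast
    then show ?thesis unfolding f_def by (rule LeastI)
  qed
  then have "specialising T f"
    using AA unfolding specialising_def antichain_def by metis
  then show ?thesis by (rule that)
qed

lemma splitting_meet_avoiding:
  fixes T :: "('o::wellorder) node set"
  assumes om: "uncountable (UNIV :: 'o set)" and segs: "\<forall>a::'o. countable {..<a}"
    and aron: "aronszajn p T" and X: "X \<subseteq> T" and meets: "\<forall>u\<in>X. \<forall>v\<in>X. meet u v \<in> T"
    and f: "specialising T f" and F: "finite F"
    and y: "y \<in> T" "uncountable {x\<in>X. y \<subseteq>\<^sub>m x}"
  shows "\<exists>u\<in>X. \<exists>v\<in>X. \<not> comparable u v \<and> y \<subseteq>\<^sub>m meet u v \<and> f (meet u v) \<notin> F \<and>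
           (\<exists>y'\<in>T. tless (meet u v) y' \<and> uncountable {x\<in>X. y' \<subseteq>\<^sub>m x})"
  using F y
proof (induction F arbitrary: y rule: finite_induct)
  case empty
  obtain u v y' where "u \<in> X" "v \<in> X" "\<not> comparable u v" "y \<subseteq>\<^sub>m meet u v"
    "y' \<in> T" "tless (meet u v) y'" "uncountable {x\<in>X. y' \<subseteq>\<^sub>m x}"
    using splitting_meet_above[OF om segs aron X empty.prems] .
  then show ?case by blast
next
  case (insert a F)
  obtain u v y' where uv: "u \<in> X" "v \<in> X" "\<not> comparable u v" "y \<subseteq>\<^sub>m meet u v"
    "f (meet u v) \<notin> F" and y': "y' \<in> T" "tless (meet u v) y'" "uncountable {x\<in>X. y' \<subseteq>\<^sub>m x}"
    using insert.IH[OF insert.prems] by blast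
  show ?case
  proof (cases "f (meet u v) = a")
    case False
    then show ?thesis using uv y' by blast
  next
    case True
    obtain u' v' where uv': "u' \<in> X" "v' \<in> X" "\<not> comparable u' v'" "y' \<subseteq>\<^sub>m meet u' v'"
      "f (meet u' v') \<notin> F" and rest: "\<exists>y''\<in>T. tless (meet u' v') y'' \<and> uncountable {x\<in>X. y'' \<subseteq>\<^sub>m x}"
      using insert.IH[OF y'(1,3)] by blast
    have "tless (meet u v) (meet u' v')" using y'(2) uv'(4) by (rule tless_map_le_trans)
    moreover have "meet u v \<in> T" "meet u' v' \<in> T" using meets uv(1,2) uv'(1,2) by blast+
    ultimately have "f (meet u' v') \<noteq> a" using f True unfolding specialising_def by metis
    moreover have "y \<subseteq>\<^sub>m meet u' v'"
      using map_le_trans[OF uv(4) \<open>tless (meet u v) (meet u' v')\<close>[unfolded tless_def, THEN conjunct1]] .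
    ultimately show ?thesis using uv'(1,2,3,5) rest by blast
  qed
qed

lemma uncountable_fibre:
  fixes f :: "'a \<Rightarrow> nat"
  assumes "uncountable S"
  obtains n where "uncountable {x\<in>S. f x = n}"
proof -
  have "countable S" if "\<forall>n. countable {x\<in>S. f x = n}"
  proof -
    have "countable (\<Union>n. {x\<in>S. f x = n})" using that by (intro countable_UN) auto
    moreover have "S = (\<Union>n. {x\<in>S. f x = n})" by auto
    ultimately show ?thesis by simp
  qed
  then show ?thesis using assms that by blast
qed

lemma aronszajn_empty_node:
  fixes T :: "('o::wellorder) node set"
  assumes "aronszajn p T"
  shows "Map.empty \<in> T"
proof -
  have "T \<noteq> {}" and Tres: "\<forall>t\<in>T. \<forall>a. t |` {..<a} \<in> T"
    using assms by (auto simp: aronszajn_def is_tree_def)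
  then obtain t where t: "t \<in> T" by blast
  have "{..<(LEAST a::'o. True)} = {}" using Least_le[of "\<lambda>_. True"] by (auto simp: not_less[symmetric])
  then have "t |` {..<(LEAST a::'o. True)} = Map.empty" by simp
  then show ?thesis using Tres t by metis
qed

lemma subtree_branching:
  fixes T :: "('o::wellorder) node set"
  assumes om: "uncountable (UNIV :: 'o set)" and segs: "\<forall>a::'o. countable {..<a}"
    and aron: "aronszajn p T" and f: "specialising T f" and S: "subtree T S"
  obtains s u v where "s \<in> S" "u \<in> S" "v \<in> S" "tless s u" "tless s v" "f u < f s" "f v < f s"
    "u (lg s) \<noteq> v (lg s)"
proof -
  have ST: "S \<subseteq> T" and meets: "\<forall>u\<in>S. \<forall>v\<in>S. meet u v \<in> S"
    and Sunc: "uncountable S" using S by (auto simp: subtree_def)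
  obtain n where n: "uncountable {x\<in>S. f x = n}" using Sunc by (rule uncountable_fibre)
  define X where "X = {x\<in>S. f x = n}"
  have X: "X \<subseteq> T" "\<forall>u\<in>X. \<forall>v\<in>X. meet u v \<in> T" using ST meets by (auto simp: X_def)
  have "uncountable {x\<in>X. Map.empty \<subseteq>\<^sub>m x}" using n by (simp add: X_def)
  then obtain u v where uv: "u \<in> X" "v \<in> X" "\<not> comparable u v" "f (meet u v) \<notin> {..n}"
    using splitting_meet_avoiding[OF om segs aron X f finite_atMost aronszajn_empty_node[OF aron]]
    by blast
  have seq: "u \<in> seqs p" "v \<in> seqs p" using uv(1,2) X(1) aronszajn_subset_seqs[OF aron] by auto
  note m = meet_incomparable[OF seq uv(3)]
  have "meet u v \<in> S" "u \<in> S" "v \<in> S" using uv(1,2) meets by (auto simp: X_def)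
  moreover have "f u < f (meet u v)" "f v < f (meet u v)" using uv by (auto simp: X_def)
  ultimately show ?thesis by (rule that[OF _ _ _ m(2,3) _ _ m(4)])
qed

lemma subtree_increasing_pair:
  fixes T :: "('o::wellorder) node set"
  assumes om: "uncountable (UNIV :: 'o set)" and segs: "\<forall>a::'o. countable {..<a}"
    and aron: "aronszajn p T" and f: "specialising T f" and S: "subtree T S"
  obtains s t where "s \<in> S" "t \<in> S" "tless s t" "f s < f t"
proof -
  have ST: "S \<subseteq> T" and meets: "\<forall>u\<in>S. \<forall>v\<in>S. meet u v \<in> S"
    using S by (auto simp: subtree_def)
  have meetsT: "\<forall>u\<in>S. \<forall>v\<in>S. meet u v \<in> T" using ST meets by blast
  have "uncountable {x\<in>S. Map.empty \<subseteq>\<^sub>m x}" using S by (simp add: subtree_def)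
  then obtain u v y where uv: "u \<in> S" "v \<in> S"
    and y: "y \<in> T" "tless (meet u v) y" "uncountable {x\<in>S. y \<subseteq>\<^sub>m x}"
    using splitting_meet_avoiding[OF om segs aron ST meetsT f finite.emptyI
        aronszajn_empty_node[OF aron]] by blast
  obtain u' v' where uv': "u' \<in> S" "v' \<in> S" "y \<subseteq>\<^sub>m meet u' v'" "f (meet u' v') \<notin> {..f (meet u v)}"
    using splitting_meet_avoiding[OF om segs aron ST meetsT f finite_atMost y(1,3)] by blast
  have "meet u v \<in> S" "meet u' v' \<in> S" using meets uv uv'(1,2) by blast+
  moreover have "tless (meet u v) (meet u' v')" using y(2) uv'(3) by (rule tless_map_le_trans)
  moreover have "f (meet u v) < f (meet u' v')" using uv'(4) by simp
  ultimately show ?thesis by (rule that)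
qed

(* On {s, t} with s < t the two THEs select s and t; elsewhere the value is junk. *)
definition pair_colour :: "nat \<Rightarrow> (('o::wellorder) node \<Rightarrow> nat) \<Rightarrow> 'o node set \<Rightarrow> nat" where
  "pair_colour p f P =
     (let s = THE s. s \<in> P \<and> (\<forall>t\<in>P. s \<subseteq>\<^sub>m t);
          t = THE t. t \<in> P \<and> (\<forall>s\<in>P. s \<subseteq>\<^sub>m t)
      in if f s < f t then p else the (t (lg s)))"

lemma pair_colour_tless:
  assumes "tless s t"
  shows "pair_colour p f {s, t} = (if f s < f t then p else the (t (lg s)))"
proof -
  have st: "s \<subseteq>\<^sub>m t" "\<not> t \<subseteq>\<^sub>m s" using assms map_le_antisym unfolding tless_def by blast+
  have "(THE x. x \<in> {s, t} \<and> (\<forall>y\<in>{s, t}. x \<subseteq>\<^sub>m y)) = s"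
    by (rule the_equality) (use st in auto)
  moreover have "(THE x. x \<in> {s, t} \<and> (\<forall>y\<in>{s, t}. y \<subseteq>\<^sub>m x)) = t"
    by (rule the_equality) (use st in auto)
  ultimately show ?thesis by (simp add: pair_colour_def)
qed

lemma pair_colour_downward:
  assumes "s \<in> seqs p" "t \<in> seqs p" "tless s t" "\<not> f s < f t"
  shows "t (lg s) = Some (pair_colour p f {s, t})" "pair_colour p f {s, t} < p"
proof -
  obtain a where a: "t (lg s) = Some a" using lg_in_dom_if_tless[OF assms(1-3)] by blast
  then have "pair_colour p f {s, t} = a" using pair_colour_tless[OF assms(3)] assms(4) by simp
  then show "t (lg s) = Some (pair_colour p f {s, t})" "pair_colour p f {s, t} < p"
    using a seqs_value_less[OF assms(2) a] by simp_all
qed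

lemma pair_colour_le:
  assumes "s \<in> seqs p" "t \<in> seqs p" "tless s t"
  shows "pair_colour p f {s, t} \<le> p"
proof (cases "f s < f t")
  case True
  then show ?thesis by (simp add: pair_colour_tless[OF assms(3)])
next
  case False
  then show ?thesis using pair_colour_downward(2)[OF assms False] by simp
qed

lemma subtree_three_pair_colours:
  fixes T :: "('o::wellorder) node set"
  assumes om: "uncountable (UNIV :: 'o set)" and segs: "\<forall>a::'o. countable {..<a}"
    and aron: "aronszajn p T" and f: "specialising T f" and S: "subtree T S"
  shows "3 \<le> card {pair_colour p f {s, t} | s t. s \<in> S \<and> t \<in> S \<and> tless s t}"
proof -
  define C where "C = {pair_colour p f {s, t} | s t. s \<in> S \<and> t \<in> S \<and> tless s t}"
  have Sseq: "S \<subseteq> seqs p" using S aronszajn_subset_seqs[OF aron] by (auto simp: subtree_def)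
  obtain s u v where suv: "s \<in> S" "u \<in> S" "v \<in> S" "tless s u" "tless s v" "f u < f s" "f v < f s"
    and diff: "u (lg s) \<noteq> v (lg s)"
    using subtree_branching[OF om segs aron f S] .
  obtain s' t' where st': "s' \<in> S" "t' \<in> S" "tless s' t'" "f s' < f t'"
    using subtree_increasing_pair[OF om segs aron f S] .
  have cu: "u (lg s) = Some (pair_colour p f {s, u})" "pair_colour p f {s, u} < p"
    using pair_colour_downward[of s p u f] suv Sseq by auto
  have cv: "v (lg s) = Some (pair_colour p f {s, v})" "pair_colour p f {s, v} < p"
    using pair_colour_downward[of s p v f] suv Sseq by auto
  have "pair_colour p f {s', t'} \<in> C" "pair_colour p f {s, u} \<in> C" "pair_colour p f {s, v} \<in> C"
    unfolding C_def using suv st' by blast+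
  moreover have "pair_colour p f {s', t'} = p" using pair_colour_tless[OF st'(3)] st'(4) by simp
  ultimately have sub: "{p, pair_colour p f {s, u}, pair_colour p f {s, v}} \<subseteq> C" by simp
  have "C \<subseteq> {..p}"
  proof
    fix c assume "c \<in> C"
    then obtain s t where "c = pair_colour p f {s, t}" "s \<in> S" "t \<in> S" "tless s t"
      unfolding C_def by blast
    then show "c \<in> {..p}" using pair_colour_le[of s p t f] Sseq by auto
  qed
  then have "finite C" by (rule finite_subset) simp
  have "pair_colour p f {s, u} \<noteq> pair_colour p f {s, v}" using cu(1) cv(1) diff by metis
  with cu(2) cv(2) have "card {p, pair_colour p f {s, u}, pair_colour p f {s, v}} = 3" by simp
  then show ?thesis using card_mono[OF \<open>finite C\<close> sub] unfolding C_def by simp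
qed

theorem theorem3:
  fixes T :: "('o::wellorder) node set" and p :: nat
  assumes omega1_uncountable: "uncountable (UNIV :: 'o set)"
    and omega1_segments: "\<forall>a::'o. countable {..<a}"
    and cat: "CAT TYPE('o)"
    and p2: "p \<ge> 2"
    and aron: "aronszajn p T"
    and spec: "special T"
    and bin: "binarisable T"
  shows "\<exists>c :: 'o node set \<Rightarrow> nat.
           (\<forall>s\<in>T. \<forall>t\<in>T. tless s t \<longrightarrow> c {s, t} \<le> p) \<and>
           (\<forall>S. subtree T S \<longrightarrow>
              3 \<le> card {c {s, t} | s t. s \<in> S \<and> t \<in> S \<and> tless s t})"
proof -
  obtain f where f: "specialising T f" using spec by (rule special_imp_specialising)
  have bound: "\<forall>s\<in>T. \<forall>t\<in>T. tless s t \<longrightarrow> pair_colour p f {s, t} \<le> p"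
    using pair_colour_le aronszajn_subset_seqs[OF aron] by blast
  have three: "\<forall>S. subtree T S \<longrightarrow>
      3 \<le> card {pair_colour p f {s, t} | s t. s \<in> S \<and> t \<in> S \<and> tless s t}"
    using subtree_three_pair_colours[OF omega1_uncountable omega1_segments aron f] by blast
  show ?thesis by (rule exI[of _ "pair_colour p f"]) (rule conjI[OF bound three])
qed

end
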